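(* Let $\mathcal{T}$ be the set of infinite sequences $\mathbf{k}=(k_1,k_2,\ldots)$ of positive integers with $k_1\geq 2$, $k_i\geq 1$ for $i\geq 2$, and such that if $k_1=2$ then $k_s\geq 2$ for some $s\geq 2$. (i) For every $\mathbf{k}\in\mathcal{T}$ the limit $\lim_{r\to\infty}\zeta^{\star}(k_1,\ldots,k_r)$ exists and is $>1$. (ii) The map $\eta:\mathcal{T}\to(1,+\infty)$, $\eta(\mathbf{k})=\lim_{r\to\infty}\zeta^{\star}(k_1,\ldots,k_r)$, is bijective. Moreover, defining $\mathbf{k}\succ\mathbf{m}$ for $\mathbf{k},\mathbf{m}\in\mathcal{T}$ to mean that there is $j\geq 0$ with $k_i=m_i$ for $1\leq i\leq j$ and $k_{j+1}<m_{j+1}$, we have $\mathbf{k}\succ\mathbf{m}$ if and only if $\eta(\mathbf{k})>\eta(\mathbf{m})$. (iii) Let $\mathcal{Z}^{\star}$ be the set of all multiple zeta-star values. Then for every $n\geq 1$, the $n$-th derived set of $\mathcal{Z}^{\star}$ equals $[1,+\infty)$.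
   Context: For integers $k_1\geq 2$, $k_2,\ldots,k_r\geq 1$ ($r\geq1$), $\zeta^{\star}(k_1,\ldots,k_r)=\sum_{n_1\geq\cdots\geq n_r\geq 1}\frac{1}{n_1^{k_1}\cdots n_r^{k_r}}$; $\mathcal{Z}^{\star}$ is the set of all such values. For $\mathcal{C}\subseteq\mathbb{R}$, $\mathcal{C}'$ is its set of accumulation points, $\mathcal{C}^{(1)}=\mathcal{C}'$ and $\mathcal{C}^{(n+1)}=(\mathcal{C}^{(n)})'$. *)

theory Defs
  imports "HOL-Analysis.Analysis"
begin

definition zs_indices :: "nat list \<Rightarrow> nat list set" where
  "zs_indices ks = {ns. length ns = length ks \<and> sorted_wrt (\<ge>) ns \<and> (\<forall>n\<in>set ns. n \<ge> 1)}"

definition zeta_star :: "nat list \<Rightarrow> real" where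
  "zeta_star ks = (\<Sum>\<^sub>\<infinity>ns\<in>zs_indices ks. \<Prod>i<length ks. 1 / real (ns ! i) ^ (ks ! i))"

definition admissible :: "nat list \<Rightarrow> bool" where
  "admissible ks \<longleftrightarrow> ks \<noteq> [] \<and> hd ks \<ge> 2 \<and> (\<forall>k\<in>set ks. k \<ge> 1)"

definition Zstar :: "real set" where
  "Zstar = {zeta_star ks | ks. admissible ks}"

definition derived_set :: "real set \<Rightarrow> real set" where
  "derived_set S = {x. x islimpt S}"

text \<open>The set T of infinite sequences; index 0 corresponds to k_1.\<close>
definition seqT :: "(nat \<Rightarrow> nat) set" where
  "seqT = {k. k 0 \<ge> 2 \<and> (\<forall>i. k i \<ge> 1) \<and> (k 0 = 2 \<longrightarrow> (\<exists>s\<ge>1. k s \<ge> 2))}"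

definition eta :: "(nat \<Rightarrow> nat) \<Rightarrow> real" where
  "eta k = lim (\<lambda>r. zeta_star (map k [0..<r]))"

definition succT :: "(nat \<Rightarrow> nat) \<Rightarrow> (nat \<Rightarrow> nat) \<Rightarrow> bool" where
  "succT k m \<longleftrightarrow> (\<exists>j. (\<forall>i<j. k i = m i) \<and> k j < m j)"

end

theory Submission
  imports Defs
begin

text \<open>Appending an entry to an index strictly increases \<open>\<zeta>\<^sup>\<star>\<close>, while appending a large entry changes it arbitrarily little. Weighting the
  innermost summand by \<open>n\<^sub>s\<close>, which turns \<open>(k\<^sub>1, \<dots>, k\<^sub>s)\<close> into \<open>(k\<^sub>1, \<dots>, k\<^sub>s - 1)\<close>, bounds
  every continuation of \<open>(k\<^sub>1, \<dots>, k\<^sub>s)\<close> from above. Hence \<open>\<zeta>\<^sup>\<star>(k\<^sub>1, \<dots>, k\<^sub>r)\<close> increases to a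
  finite limit \<open>\<eta>(k)\<close>, and a first disagreement \<open>k\<^sub>j < m\<^sub>j\<close> gives
  \<open>\<eta>(m) \<le> \<zeta>\<^sup>\<star>(k\<^sub>1, \<dots>, k\<^sub>j) < \<eta>(k)\<close>. For \<open>x > 1\<close> choose each \<open>k\<^sub>r\<^sub>+\<^sub>1\<close> least with
  \<open>\<zeta>\<^sup>\<star>(k\<^sub>1, \<dots>, k\<^sub>r\<^sub>+\<^sub>1) < x\<close>: minimality keeps \<open>x\<close> below the weighted bound of every prefix,
  and along any sequence in \<open>seqT\<close> the weighted and unweighted sums merge, so \<open>\<eta>(k) = x\<close>.
  The values \<open>\<zeta>\<^sup>\<star>(k\<^sub>1, \<dots>, k\<^sub>r) < x\<close> then accumulate at every \<open>x \<ge> 1\<close>, and \<open>[1, \<infinity>)\<close> is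
  its own derived set.\<close>

section \<open>Weighted truncated sums\<close>

text \<open>\<open>zs_sum w [k\<^sub>1, \<dots>, k\<^sub>r] N = \<Sum>\<^bsub>N \<ge> n\<^sub>1 \<ge> \<dots> \<ge> n\<^sub>r \<ge> 1\<^esub> w n\<^sub>r / (n\<^sub>1 ^ k\<^sub>1 \<cdots> n\<^sub>r ^ k\<^sub>r)\<close>,
  and \<open>zs_sum w [] N = w N\<close>.\<close>

primrec zs_sum :: "(nat \<Rightarrow> real) \<Rightarrow> nat list \<Rightarrow> nat \<Rightarrow> real" where
  "zs_sum w [] n = w n"
| "zs_sum w (k # ks) n = (\<Sum>m=1..n. zs_sum w ks m / real m ^ k)"

abbreviation zs_partial :: "nat list \<Rightarrow> nat \<Rightarrow> real" where
  "zs_partial \<equiv> zs_sum (\<lambda>_. 1)"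

lemma zs_sum_append: "zs_sum w (xs @ ys) n = zs_sum (zs_sum w ys) xs n"
  by (induction xs arbitrary: n) auto

lemma zs_sum_nonneg:
  assumes "\<And>m. m \<ge> 1 \<Longrightarrow> 0 \<le> w m" and "n \<ge> 1"
  shows "0 \<le> zs_sum w ks n"
  using assms(2) by (induction ks arbitrary: n) (auto intro!: sum_nonneg divide_nonneg_pos assms(1))

lemma zs_sum_mono_weight:
  assumes "\<And>m. m \<ge> 1 \<Longrightarrow> w m \<le> w' m" and "n \<ge> 1"
  shows "zs_sum w ks n \<le> zs_sum w' ks n"
  using assms(2) by (induction ks arbitrary: n) (auto intro!: sum_mono divide_right_mono assms(1))

lemma zs_sum_cmult: "zs_sum (\<lambda>m. c * w m) ks n = c * zs_sum w ks n"
  by (induction ks arbitrary: n) (auto simp: sum_distrib_left)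

lemma zs_sum_diff: "zs_sum (\<lambda>m. w m - w' m) ks n = zs_sum w ks n - zs_sum w' ks n"
  by (induction ks arbitrary: n) (auto simp: sum_subtractf diff_divide_distrib)

lemma zs_sum_mono_upper:
  assumes nonneg: "\<And>m. m \<ge> 1 \<Longrightarrow> 0 \<le> w m"
    and mono: "\<And>m m'. 1 \<le> m \<Longrightarrow> m \<le> m' \<Longrightarrow> w m \<le> w m'"
    and "1 \<le> n" "n \<le> n'"
  shows "zs_sum w ks n \<le> zs_sum w ks n'"
proof (cases ks)
  case Nil
  then show ?thesis using mono assms(3,4) by simp
next
  case (Cons k ks')
  have "(\<Sum>m=1..n. zs_sum w ks' m / real m ^ k) \<le> (\<Sum>m=1..n'. zs_sum w ks' m / real m ^ k)"
    using \<open>n \<le> n'\<close> by (intro sum_mono2) (auto intro!: divide_nonneg_pos zs_sum_nonneg nonneg)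
  then show ?thesis using Cons by simp
qed

lemma zs_sum_antimono_index:
  assumes nonneg: "\<And>m. m \<ge> 1 \<Longrightarrow> 0 \<le> w m"
    and "list_all2 (\<le>) ks ks'" "n \<ge> 1"
  shows "zs_sum w ks' n \<le> zs_sum w ks n"
  using assms(2,3)
proof (induction ks arbitrary: ks' n)
  case (Cons k ks)
  then obtain k' ks2 where ks': "ks' = k' # ks2" "k \<le> k'" "list_all2 (\<le>) ks ks2"
    by (cases ks') auto
  have "zs_sum w ks2 m / real m ^ k' \<le> zs_sum w ks m / real m ^ k" if "m \<ge> 1" for m
  proof -
    have "zs_sum w ks2 m / real m ^ k' \<le> zs_sum w ks2 m / real m ^ k"
      using that \<open>k \<le> k'\<close>
      by (intro divide_left_mono zs_sum_nonneg nonneg) (auto intro: power_increasing)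
    also have "\<dots> \<le> zs_sum w ks m / real m ^ k"
      using Cons.IH[OF ks'(3) that] that by (intro divide_right_mono) auto
    finally show ?thesis .
  qed
  then show ?case using ks' by (auto intro!: sum_mono)
qed simp

lemma zs_sum_pos:
  assumes "\<And>m. m \<ge> 1 \<Longrightarrow> 0 \<le> w m" and "w n > 0" and "n \<ge> 1"
  shows "zs_sum w ks n > 0"
proof (induction ks)
  case (Cons k ks)
  have "0 < zs_sum w ks n / real n ^ k"
    using Cons assms(3) by simp
  also have "\<dots> \<le> (\<Sum>m=1..n. zs_sum w ks m / real m ^ k)"
    using assms(3) by (intro member_le_sum) (auto intro!: divide_nonneg_pos zs_sum_nonneg assms(1))
  finally show ?case by simp
qed (use assms in simp)

lemma incseq_zs_partial: "incseq (zs_partial ks)"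
proof (cases ks)
  case (Cons k ks')
  show ?thesis
    unfolding incseq_def Cons
    by (auto intro!: sum_mono2 divide_nonneg_pos zs_sum_nonneg)
qed (simp add: incseq_def)

lemma zs_partial_1: "zs_partial ks 1 = 1"
  by (induction ks) auto

lemma zs_sum_real_replicate_1: "zs_sum real (replicate t 1) n = real n"
  by (induction t arbitrary: n) auto

lemma zs_sum_real_snoc_1: "zs_sum real (p @ [1]) = zs_sum real p"
proof -
  have "zs_sum real [1] = real" by (rule ext) simp
  then show ?thesis by (intro ext) (simp only: zs_sum_append)
qed

lemma zs_sum_real_snoc:
  assumes "b \<ge> 1"
  shows "zs_sum real (p @ [b]) n = zs_partial (p @ [b - 1]) n"
proof -
  have "real m / real m ^ b = 1 / real m ^ (b - 1)" if "m \<ge> 1" for m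
  proof -
    have "real m ^ b = real m * real m ^ (b - 1)"
      using assms by (metis Suc_diff_le diff_Suc_1 power_Suc)
    then show ?thesis using that by simp
  qed
  then have "zs_sum real [b] = zs_partial [b - 1]"
    by (auto intro!: ext sum.cong)
  then show ?thesis by (simp add: zs_sum_append)
qed

lemma zs_partial_le_zs_sum_real: "n \<ge> 1 \<Longrightarrow> zs_partial p n \<le> zs_sum real p n"
  by (intro zs_sum_mono_weight) auto

lemma zs_sum_real_append_le:
  assumes "\<forall>k\<in>set q. k \<ge> 1" and "n \<ge> 1"
  shows "zs_sum real (p @ q) n \<le> zs_sum real p n"
proof -
  have "zs_sum real q m \<le> real m" if "m \<ge> 1" for m
  proof -
    have "list_all2 (\<le>) (replicate (length q) 1) q"
      using assms(1) by (auto simp: list_all2_conv_all_nth)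
    then have "zs_sum real q m \<le> zs_sum real (replicate (length q) 1) m"
      using that by (intro zs_sum_antimono_index) auto
    then show ?thesis using zs_sum_real_replicate_1[of "length q" m] by linarith
  qed
  then show ?thesis
    unfolding zs_sum_append using assms(2) by (intro zs_sum_mono_weight) auto
qed

lemma zs_sum_real_2: "zs_sum real [2] n = harm n"
proof -
  have "real m / real m ^ 2 = inverse (real m)" for m
    by (cases "m = 0") (auto simp: power2_eq_square field_simps)
  then show ?thesis unfolding harm_def by simp
qed

lemma zs_sum_real_eq_partial_add_defect:
  "zs_sum real ks n = zs_partial ks n + zs_sum (\<lambda>m. real m - 1) ks n"
  using zs_sum_diff[of real "\<lambda>_. 1" ks n] by simp

lemma zs_sum_defect_ones_le:
  assumes "n \<ge> 1"
  shows "zs_sum (\<lambda>m. real m - 1) (replicate t 1) n \<le> (real n - 1) * (1 - 1 / real n) ^ t"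
  using assms
proof (induction t arbitrary: n)
  case (Suc t)
  let ?q = "(1 - 1 / real n) ^ Suc t"
  have term_le: "zs_sum (\<lambda>m. real m - 1) (replicate t 1) m / real m \<le> (if m = 1 then 0 else ?q)"
    if m: "m \<in> {1..n}" for m
  proof -
    have "zs_sum (\<lambda>m. real m - 1) (replicate t 1) m / real m
        \<le> (real m - 1) * (1 - 1 / real m) ^ t / real m"
      using Suc.IH[of m] m by (intro divide_right_mono) auto
    also have "\<dots> = (1 - 1 / real m) ^ Suc t"
      using m by (simp add: field_simps)
    also have "\<dots> \<le> (if m = 1 then 0 else ?q)"
    proof (cases "m = 1")
      case False
      have "1 / real n \<le> 1 / real m" using m by (intro divide_left_mono) auto
      then have "(1 - 1 / real m) ^ Suc t \<le> ?q" using m by (intro power_mono) auto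
      then show ?thesis using False by simp
    qed simp
    finally show ?thesis .
  qed
  have "zs_sum (\<lambda>m. real m - 1) (replicate (Suc t) 1) n
      = (\<Sum>m=1..n. zs_sum (\<lambda>m. real m - 1) (replicate t 1) m / real m)"
    by simp
  also have "\<dots> \<le> (\<Sum>m=1..n. if m = 1 then 0 else ?q)"
    using term_le by (rule sum_mono)
  also have "\<dots> = (real n - 1) * ?q"
  proof -
    have "{1..n} - {1} = {2..n}" by auto
    with Suc.prems show ?thesis
      by (simp add: sum.If_cases Int_absorb1 Diff_eq[symmetric])
  qed
  finally show ?case .
qed simp

lemma zs_sum_defect_ones_tendsto_0:
  assumes n: "n \<ge> 1"
  shows "(\<lambda>t. zs_sum (\<lambda>m. real m - 1) (replicate t 1) n) \<longlonglongrightarrow> 0"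
proof (rule tendsto_sandwich[where f = "\<lambda>_. 0" and h = "\<lambda>t. (real n - 1) * (1 - 1 / real n) ^ t"])
  have "norm (1 - 1 / real n) < 1"
    using n by (simp add: abs_if)
  then have "(\<lambda>t. (real n - 1) * (1 - 1 / real n) ^ t) \<longlonglongrightarrow> (real n - 1) * 0"
    by (intro tendsto_mult tendsto_const LIMSEQ_power_zero)
  then show "(\<lambda>t. (real n - 1) * (1 - 1 / real n) ^ t) \<longlonglongrightarrow> 0" by simp
  show "\<forall>\<^sub>F t in sequentially. 0 \<le> zs_sum (\<lambda>m. real m - 1) (replicate t 1) n"
    using n by (intro always_eventually allI zs_sum_nonneg) auto
  show "\<forall>\<^sub>F t in sequentially.
      zs_sum (\<lambda>m. real m - 1) (replicate t 1) n \<le> (real n - 1) * (1 - 1 / real n) ^ t"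
    using zs_sum_defect_ones_le[OF n] by simp
qed simp

lemma zs_partial_ones_tendsto:
  assumes "n \<ge> 1"
  shows "(\<lambda>t. zs_partial (replicate t 1) n) \<longlonglongrightarrow> real n"
proof -
  have "(\<lambda>t. real n - zs_sum (\<lambda>m. real m - 1) (replicate t 1) n) \<longlonglongrightarrow> real n - 0"
    by (intro tendsto_diff tendsto_const zs_sum_defect_ones_tendsto_0 assms)
  moreover have "zs_partial (replicate t 1) n = real n - zs_sum (\<lambda>m. real m - 1) (replicate t 1) n" for t
    using zs_sum_real_eq_partial_add_defect[of "replicate t 1" n] zs_sum_real_replicate_1[of t n]
    by linarith
  ultimately show ?thesis by simp
qed

lemma sum_inverse_sqrt_le: "(\<Sum>m=1..n. 1 / sqrt (real m)) \<le> 2 * sqrt (real n)"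
proof (induction n)
  case (Suc n)
  have "sqrt (real n) * sqrt (real (Suc n)) \<le> real n + 1/2"
  proof -
    have "sqrt (real n) * sqrt (real (Suc n)) = sqrt (real n * real (Suc n))"
      by (simp add: real_sqrt_mult)
    also have "\<dots> \<le> sqrt ((real n + 1/2)^2)"
      by (intro real_sqrt_le_mono) (simp add: power2_eq_square algebra_simps)
    finally show ?thesis by simp
  qed
  then have "(2 * sqrt (real n) + 1 / sqrt (real (Suc n))) * sqrt (real (Suc n))
      \<le> (2 * sqrt (real (Suc n))) * sqrt (real (Suc n))"
    by (simp add: algebra_simps)
  then have "2 * sqrt (real n) + 1 / sqrt (real (Suc n)) \<le> 2 * sqrt (real (Suc n))"
    by (simp only: mult_le_cancel_right) simp
  then show ?case using Suc.IH by simp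
qed simp

lemma zs_partial_le_sqrt:
  assumes "\<forall>k\<in>set ks. k \<ge> 1" and "n \<ge> 1"
  shows "zs_partial ks n \<le> 2 ^ length ks * sqrt (real n)"
  using assms
proof (induction ks arbitrary: n)
  case (Cons k ks)
  have "zs_partial ks m / real m ^ k \<le> 2 ^ length ks * (1 / sqrt (real m))"
    if m: "m \<in> {1..n}" for m
  proof -
    have "zs_partial ks m / real m ^ k \<le> zs_partial ks m / real m"
      using m Cons.prems(1)
      by (intro divide_left_mono zs_sum_nonneg) (auto intro!: power_increasing[of 1, simplified])
    also have "\<dots> \<le> 2 ^ length ks * sqrt (real m) / real m"
      using Cons m by (intro divide_right_mono) auto
    also have "\<dots> = 2 ^ length ks * (1 / sqrt (real m))"
      using m by (simp add: field_simps)
    finally show ?thesis .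
  qed
  then have "zs_partial (k # ks) n \<le> (\<Sum>m=1..n. 2 ^ length ks * (1 / sqrt (real m)))"
    by (simp only: zs_sum.simps(2)) (rule sum_mono)
  also have "\<dots> \<le> 2 ^ length ks * (2 * sqrt (real n))"
    by (simp only: sum_distrib_left[symmetric]) (intro mult_left_mono sum_inverse_sqrt_le; simp)
  finally show ?case by simp
qed simp

lemma sum_sqrt_div_square_bounded: "\<exists>C. \<forall>N. (\<Sum>m=1..N. sqrt (real m) / real m ^ 2) \<le> C"
proof -
  have summable: "summable (\<lambda>n. real n powr (-3/2))"
    by (subst summable_real_powr_iff) simp
  have "(\<Sum>m=1..N. sqrt (real m) / real m ^ 2) \<le> suminf (\<lambda>n. real n powr (-3/2))" for N
  proof -
    have "sqrt (real m) / real m ^ 2 = real m powr (-3/2)" if "m \<ge> 1" for m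
    proof -
      have "real m powr (-3/2) = real m powr (1/2 - 2)" by simp
      also have "\<dots> = real m powr (1/2) / real m powr 2" by (rule powr_diff)
      finally have "real m powr (-3/2) = real m powr (1/2) / real m powr 2" .
      then show ?thesis using that by (simp add: powr_half_sqrt powr_realpow)
    qed
    then have "(\<Sum>m=1..N. sqrt (real m) / real m ^ 2) = (\<Sum>m=1..N. real m powr (-3/2))"
      by (intro sum.cong) auto
    also have "\<dots> \<le> (\<Sum>m<Suc N. real m powr (-3/2))"
      by (intro sum_mono2) auto
    also have "\<dots> \<le> suminf (\<lambda>n. real n powr (-3/2))"
      by (intro sum_le_suminf summable) auto
    finally show ?thesis .
  qed
  then show ?thesis by blast
qed

text \<open>The bound \<open>2^r \<surd>n\<close> on the inner sums makes the outer sum over \<open>n\<^sub>1\<close> converge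
  as soon as \<open>k\<^sub>1 \<ge> 2\<close>.\<close>
lemma admissible_zs_partial_bounded:
  assumes "admissible ks"
  shows "\<exists>C. \<forall>N. zs_partial ks N \<le> C"
proof -
  obtain k rest where ks: "ks = k # rest" "k \<ge> 2" "\<forall>k\<in>set rest. k \<ge> 1"
    using assms unfolding admissible_def by (cases ks) auto
  obtain C where C: "\<And>N. (\<Sum>m=1..N. sqrt (real m) / real m ^ 2) \<le> C"
    using sum_sqrt_div_square_bounded by blast
  have "zs_partial ks N \<le> 2 ^ length rest * C" for N
  proof -
    have "zs_partial rest m / real m ^ k \<le> 2 ^ length rest * (sqrt (real m) / real m ^ 2)"
      if m: "m \<in> {1..N}" for m
    proof -
      have "zs_partial rest m / real m ^ k \<le> zs_partial rest m / real m ^ 2"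
        using m ks(2) by (intro divide_left_mono zs_sum_nonneg) (auto intro!: power_increasing)
      also have "\<dots> \<le> 2 ^ length rest * sqrt (real m) / real m ^ 2"
        using zs_partial_le_sqrt[OF ks(3)] m by (intro divide_right_mono) auto
      finally show ?thesis by simp
    qed
    then have "zs_partial ks N \<le> (\<Sum>m=1..N. 2 ^ length rest * (sqrt (real m) / real m ^ 2))"
      unfolding ks(1) by (simp only: zs_sum.simps(2)) (rule sum_mono)
    also have "\<dots> \<le> 2 ^ length rest * C"
      by (simp only: sum_distrib_left[symmetric]) (intro mult_left_mono C; simp)
    finally show ?thesis .
  qed
  then show ?thesis by blast
qed

section \<open>Truncations converge to zeta-star values\<close>

lemma tendsto_infsum_exhausting_nonneg:
  fixes f :: "'a \<Rightarrow> real" and B :: "nat \<Rightarrow> 'a set"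
  assumes nonneg: "\<And>x. x \<in> A \<Longrightarrow> 0 \<le> f x"
    and finite: "\<And>N. finite (B N)" and subset: "\<And>N. B N \<subseteq> A" and "mono B"
    and exhaust: "\<And>F. finite F \<Longrightarrow> F \<subseteq> A \<Longrightarrow> \<exists>N. F \<subseteq> B N"
    and bounded: "\<And>N. sum f (B N) \<le> C"
  shows "(\<lambda>N. sum f (B N)) \<longlonglongrightarrow> infsum f A"
proof -
  have "filterlim B (finite_subsets_at_top A) sequentially"
    unfolding filterlim_finite_subsets_at_top
  proof (intro allI impI)
    fix X assume "finite X \<and> X \<subseteq> A"
    then obtain N where "X \<subseteq> B N" using exhaust by blast
    then show "\<forall>\<^sub>F M in sequentially. finite (B M) \<and> X \<subseteq> B M \<and> B M \<subseteq> A"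
      using \<open>mono B\<close> finite subset
      by (auto simp: eventually_sequentially dest: monoD intro!: exI[of _ N])
  qed
  moreover have "f summable_on A"
  proof (rule nonneg_bdd_above_summable_on)
    show "bdd_above (sum f ` {F. F \<subseteq> A \<and> finite F})"
    proof (rule bdd_aboveI2)
      fix F assume "F \<in> {F. F \<subseteq> A \<and> finite F}"
      then obtain N where "F \<subseteq> B N" using exhaust by blast
      then have "sum f F \<le> sum f (B N)"
        using nonneg subset by (intro sum_mono2 finite) auto
      then show "sum f F \<le> C" using bounded order_trans by blast
    qed
  qed (use nonneg in auto)
  then have "(sum f \<longlongrightarrow> infsum f A) (finite_subsets_at_top A)"
    using has_sum_infsum has_sum_def by blast
  ultimately show ?thesis using filterlim_compose by blast
qed

definition zs_term :: "nat list \<Rightarrow> nat list \<Rightarrow> real" where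
  "zs_term ks ns = (\<Prod>i<length ks. 1 / real (ns ! i) ^ (ks ! i))"

definition zs_indices_upto :: "nat list \<Rightarrow> nat \<Rightarrow> nat list set" where
  "zs_indices_upto ks N = {ns \<in> zs_indices ks. \<forall>n\<in>set ns. n \<le> N}"

lemma zeta_star_eq_infsum: "zeta_star ks = infsum (zs_term ks) (zs_indices ks)"
  unfolding zeta_star_def zs_term_def ..

lemma zs_term_Cons: "zs_term (k # ks) (n # ns) = 1 / real n ^ k * zs_term ks ns"
  unfolding zs_term_def by (simp only: length_Cons prod.lessThan_Suc_shift nth_Cons_0 nth_Cons_Suc)

lemma zs_term_nonneg: "0 \<le> zs_term ks ns"
  unfolding zs_term_def by (intro prod_nonneg) auto

lemma finite_zs_indices_upto: "finite (zs_indices_upto ks N)"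
proof (rule finite_subset)
  show "zs_indices_upto ks N \<subseteq> {ns. set ns \<subseteq> {0..N} \<and> length ns = length ks}"
    unfolding zs_indices_upto_def zs_indices_def by auto
qed (rule finite_lists_length_eq; simp)

lemma mono_zs_indices_upto: "mono (zs_indices_upto ks)"
  unfolding zs_indices_upto_def by (intro monoI) auto

lemma zs_indices_upto_exhaust:
  assumes "finite F" "F \<subseteq> zs_indices ks"
  shows "\<exists>N. F \<subseteq> zs_indices_upto ks N"
proof -
  have "finite (\<Union>ns\<in>F. set ns)" using assms(1) by auto
  then obtain N where "\<forall>n\<in>(\<Union>ns\<in>F. set ns). n \<le> N"
    using finite_nat_set_iff_bounded_le by blast
  then have "F \<subseteq> zs_indices_upto ks N"
    using assms(2) unfolding zs_indices_upto_def by auto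
  then show ?thesis ..
qed

lemma zs_indices_upto_Cons:
  "zs_indices_upto (k # ks) N = (\<lambda>(n, ns). n # ns) ` (SIGMA n:{1..N}. zs_indices_upto ks n)"
proof (intro set_eqI iffI)
  fix x assume "x \<in> zs_indices_upto (k # ks) N"
  then obtain n ns where "x = n # ns" "(n, ns) \<in> (SIGMA n:{1..N}. zs_indices_upto ks n)"
    unfolding zs_indices_upto_def zs_indices_def by (cases x) auto
  then show "x \<in> (\<lambda>(n, ns). n # ns) ` (SIGMA n:{1..N}. zs_indices_upto ks n)" by force
qed (auto simp: zs_indices_upto_def zs_indices_def; meson le_trans)

lemma sum_zs_term_indices_upto: "sum (zs_term ks) (zs_indices_upto ks N) = zs_partial ks N"
proof (induction ks arbitrary: N)
  case Nil
  have "zs_indices_upto [] N = {[]}"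
    unfolding zs_indices_upto_def zs_indices_def by auto
  then show ?case by (simp add: zs_term_def)
next
  case (Cons k ks)
  have inj: "inj_on (\<lambda>(n, ns). n # ns) (SIGMA n:{1..N}. zs_indices_upto ks n)"
    by (auto simp: inj_on_def)
  have "sum (zs_term (k # ks)) (zs_indices_upto (k # ks) N)
      = (\<Sum>n=1..N. \<Sum>ns\<in>zs_indices_upto ks n. zs_term (k # ks) (n # ns))"
    unfolding zs_indices_upto_Cons sum.reindex[OF inj]
    by (simp add: case_prod_unfold sum.Sigma finite_zs_indices_upto)
  also have "\<dots> = (\<Sum>n=1..N. zs_partial ks n / real n ^ k)"
    by (simp add: zs_term_Cons Cons.IH flip: sum_divide_distrib)
  finally show ?case by simp
qed

definition admissible_or_nil :: "nat list \<Rightarrow> bool" where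
  "admissible_or_nil ks \<longleftrightarrow> ks = [] \<or> admissible ks"

lemma zs_partial_tendsto_zeta_star:
  assumes "admissible_or_nil ks"
  shows "zs_partial ks \<longlonglongrightarrow> zeta_star ks"
proof -
  obtain C where C: "\<And>N. zs_partial ks N \<le> C"
    using assms admissible_zs_partial_bounded unfolding admissible_or_nil_def by fastforce
  then have "sum (zs_term ks) (zs_indices_upto ks N) \<le> C" for N
    by (simp add: sum_zs_term_indices_upto)
  then have "(\<lambda>N. sum (zs_term ks) (zs_indices_upto ks N)) \<longlonglongrightarrow> infsum (zs_term ks) (zs_indices ks)"
    by (intro tendsto_infsum_exhausting_nonneg zs_term_nonneg finite_zs_indices_upto
        mono_zs_indices_upto zs_indices_upto_exhaust) (auto simp: zs_indices_upto_def)
  then show ?thesis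
    unfolding sum_zs_term_indices_upto zeta_star_eq_infsum .
qed

lemma zs_partial_le_zeta_star: "admissible_or_nil ks \<Longrightarrow> zs_partial ks N \<le> zeta_star ks"
  by (rule incseq_le[OF incseq_zs_partial zs_partial_tendsto_zeta_star])

lemma zeta_star_le:
  "admissible_or_nil ks \<Longrightarrow> (\<And>N. N \<ge> 1 \<Longrightarrow> zs_partial ks N \<le> B) \<Longrightarrow> zeta_star ks \<le> B"
  by (rule LIMSEQ_le_const2[OF zs_partial_tendsto_zeta_star]) auto

lemma zeta_star_Nil: "zeta_star [] = 1"
proof -
  have "zs_partial [] = (\<lambda>_. 1)" by (rule ext) simp
  then show ?thesis
    using zs_partial_tendsto_zeta_star[of "[]"] by (simp add: admissible_or_nil_def LIMSEQ_const_iff)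
qed

lemma zeta_star_ge_1: "admissible ks \<Longrightarrow> zeta_star ks \<ge> 1"
  using zs_partial_le_zeta_star[of ks 1] zs_partial_1[of ks] by (simp add: admissible_or_nil_def)

lemma admissible_snoc:
  "admissible_or_nil p \<Longrightarrow> a \<ge> 2 \<or> (p \<noteq> [] \<and> a \<ge> 1) \<Longrightarrow> admissible (p @ [a])"
  unfolding admissible_or_nil_def admissible_def by (cases p) auto

lemma zs_partial_snoc_diff:
  "zs_partial (p @ [a]) N - zs_partial p N = zs_sum (\<lambda>m. zs_partial [a] m - 1) p N"
  by (simp only: zs_sum_append zs_sum_diff)

text \<open>The difference collects the terms whose new innermost variable is \<open>\<ge> 2\<close>; among them
  the one with all variables equal to \<open>2\<close> is positive.\<close>
lemma zeta_star_less_snoc: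
  assumes p: "admissible_or_nil p" and pa: "admissible_or_nil (p @ [a])"
  shows "zeta_star p < zeta_star (p @ [a])"
proof -
  let ?w = "\<lambda>m. zs_partial [a] m - 1"
  have w_nonneg: "0 \<le> ?w m" if "m \<ge> 1" for m
  proof -
    have "1 / real 1 ^ a \<le> (\<Sum>j=1..m. 1 / real j ^ a)"
      using that by (intro member_le_sum) auto
    then show ?thesis by simp
  qed
  have w_mono: "?w m \<le> ?w m'" if "m \<le> m'" for m m'
    using incseq_zs_partial[of "[a]"] that by (simp add: incseq_def)
  have pos: "zs_sum ?w p 2 > 0"
    using w_nonneg by (intro zs_sum_pos) (auto simp: numeral_2_eq_2)
  have "(\<lambda>N. zs_partial (p @ [a]) N - zs_partial p N) \<longlonglongrightarrow> zeta_star (p @ [a]) - zeta_star p"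
    by (intro tendsto_diff zs_partial_tendsto_zeta_star p pa)
  moreover have "\<forall>\<^sub>F N in sequentially. zs_sum ?w p 2 \<le> zs_partial (p @ [a]) N - zs_partial p N"
    unfolding zs_partial_snoc_diff eventually_sequentially
    using w_nonneg w_mono by (intro exI[of _ 2] allI impI zs_sum_mono_upper) auto
  ultimately have "zs_sum ?w p 2 \<le> zeta_star (p @ [a]) - zeta_star p"
    by (rule tendsto_lowerbound) simp
  then show ?thesis using pos by linarith
qed

lemma zs_partial_single_shift_le:
  "zs_partial [a + 2] m - 1 \<le> (1/2) ^ a * zs_partial [2] m"
proof (induction m)
  case (Suc m)
  show ?case
  proof (cases "m = 0")
    case False
    have "1 / real (Suc m) ^ (a + 2) = (1 / real (Suc m)) ^ a * (1 / real (Suc m) ^ 2)"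
      by (simp add: power_add power_divide power2_eq_square)
    also have "\<dots> \<le> (1/2) ^ a * (1 / real (Suc m) ^ 2)"
      using False by (intro mult_right_mono power_mono) auto
    finally show ?thesis using Suc.IH by (simp add: algebra_simps)
  qed simp
qed simp

lemma zeta_star_snoc_le:
  assumes p: "admissible_or_nil p"
  shows "zeta_star (p @ [a + 2]) \<le> zeta_star p + (1/2) ^ a * zeta_star (p @ [2])"
proof -
  have pa: "admissible_or_nil (p @ [a + 2])" and p2: "admissible_or_nil (p @ [2])"
    using admissible_snoc[OF p] by (simp_all add: admissible_or_nil_def)
  have bound: "zs_partial (p @ [a + 2]) N - zs_partial p N \<le> (1/2) ^ a * zeta_star (p @ [2])"
    if N: "N \<ge> 1" for N
  proof -
    have "zs_partial (p @ [a + 2]) N - zs_partial p N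
        \<le> zs_sum (\<lambda>m. (1/2) ^ a * zs_partial [2] m) p N"
      unfolding zs_partial_snoc_diff
      using N zs_partial_single_shift_le by (intro zs_sum_mono_weight)
    also have "\<dots> = (1/2) ^ a * zs_partial (p @ [2]) N"
      by (simp only: zs_sum_cmult zs_sum_append)
    also have "\<dots> \<le> (1/2) ^ a * zeta_star (p @ [2])"
      using p2 by (intro mult_left_mono zs_partial_le_zeta_star) auto
    finally show ?thesis .
  qed
  have "(\<lambda>N. zs_partial (p @ [a + 2]) N - zs_partial p N)
      \<longlonglongrightarrow> zeta_star (p @ [a + 2]) - zeta_star p"
    by (intro tendsto_diff zs_partial_tendsto_zeta_star p pa)
  moreover have "\<forall>\<^sub>F N in sequentially.
      zs_partial (p @ [a + 2]) N - zs_partial p N \<le> (1/2) ^ a * zeta_star (p @ [2])"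
    by (rule eventually_sequentiallyI[of 1]) (rule bound)
  ultimately have "zeta_star (p @ [a + 2]) - zeta_star p \<le> (1/2) ^ a * zeta_star (p @ [2])"
    by (rule tendsto_upperbound) simp
  then show ?thesis by simp
qed

lemma zeta_star_snoc_tendsto:
  assumes p: "admissible_or_nil p"
  shows "(\<lambda>a. zeta_star (p @ [a + 2])) \<longlonglongrightarrow> zeta_star p"
proof (rule tendsto_sandwich[where f = "\<lambda>_. zeta_star p"
      and h = "\<lambda>a. zeta_star p + (1/2) ^ a * zeta_star (p @ [2])"])
  have "admissible_or_nil (p @ [a + 2])" for a
    using admissible_snoc[OF p] by (simp add: admissible_or_nil_def)
  then show "\<forall>\<^sub>F a in sequentially. zeta_star p \<le> zeta_star (p @ [a + 2])"
    using zeta_star_less_snoc[OF p] by (simp add: less_imp_le)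
  show "\<forall>\<^sub>F a in sequentially. zeta_star (p @ [a + 2]) \<le> zeta_star p + (1/2) ^ a * zeta_star (p @ [2])"
    using zeta_star_snoc_le[OF p] by simp
  have "(\<lambda>a. zeta_star p + (1/2::real) ^ a * zeta_star (p @ [2])) \<longlonglongrightarrow> zeta_star p + 0 * zeta_star (p @ [2])"
    by (intro tendsto_add tendsto_mult tendsto_const LIMSEQ_power_zero) simp
  then show "(\<lambda>a. zeta_star p + (1/2) ^ a * zeta_star (p @ [2])) \<longlonglongrightarrow> zeta_star p"
    by simp
qed simp

lemma seqT_ge_1: "k \<in> seqT \<Longrightarrow> k i \<ge> 1"
  unfolding seqT_def by auto

lemma admissible_seqT_prefix:
  assumes "k \<in> seqT" "r \<ge> 1"
  shows "admissible (map k [0..<r])"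
proof -
  have "[0..<r] = 0 # [1..<r]" using assms(2) by (simp add: upt_conv_Cons)
  then show ?thesis using assms(1) unfolding admissible_def seqT_def by auto
qed

lemma admissible_or_nil_seqT_prefix: "k \<in> seqT \<Longrightarrow> admissible_or_nil (map k [0..<r])"
  using admissible_seqT_prefix[of k r] by (cases r) (auto simp: admissible_or_nil_def)

lemma map_upt_split: "s \<le> r \<Longrightarrow> map k [0..<r] = map k [0..<s] @ map k [s..<r]"
  by (metis map_append le0 upt_add_eq_append le_add_diff_inverse)

lemma map_upt_Suc_Cons: "map k [0..<Suc r] = k 0 # map (\<lambda>i. k (Suc i)) [0..<r]"
  by (induction r) auto

text \<open>Lowering \<open>k\<^sub>s \<ge> 2\<close> by one gives an admissible index; this is where the condition on
  sequences starting with \<open>k\<^sub>1 = 2\<close> in \<open>seqT\<close> is needed.\<close>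
lemma seqT_lowered_prefix_admissible:
  assumes k: "k \<in> seqT"
  obtains s where "admissible (map k [0..<s] @ [k s - 1])"
proof -
  have "\<exists>s. k s \<ge> 2 \<and> (s = 0 \<longrightarrow> k 0 \<ge> 3)"
  proof (cases "k 0 = 2")
    case True
    then obtain s where "s \<ge> 1" "k s \<ge> 2" using k unfolding seqT_def by auto
    then show ?thesis by auto
  next
    case False
    then show ?thesis using k unfolding seqT_def by (intro exI[of _ 0]) auto
  qed
  then obtain s where "k s \<ge> 2" "s = 0 \<longrightarrow> k 0 \<ge> 3" by blast
  then have "admissible (map k [0..<s] @ [k s - 1])"
    by (intro admissible_snoc admissible_or_nil_seqT_prefix k) (cases s, auto)
  then show ?thesis ..
qed

text \<open>Weighting by \<open>n\<^sub>s\<close> instead of \<open>1\<close> dominates every continuation of the prefix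
  \<open>k\<^sub>1 \<dots> k\<^sub>s\<close>, and the weight \<open>n\<^sub>s\<close> cancels one power of \<open>n\<^sub>s\<close>.\<close>
lemma zs_partial_prefix_le_lowered:
  assumes k: "\<And>i. k i \<ge> 1" and r: "Suc s \<le> r" and N: "N \<ge> 1"
  shows "zs_partial (map k [0..<r]) N \<le> zs_partial (map k [0..<s] @ [k s - 1]) N"
proof -
  have "zs_partial (map k [0..<r]) N \<le> zs_sum real (map k [0..<Suc s] @ map k [Suc s..<r]) N"
    unfolding map_upt_split[OF r, symmetric] by (rule zs_partial_le_zs_sum_real[OF N])
  also have "\<dots> \<le> zs_sum real (map k [0..<Suc s]) N"
    using k N by (intro zs_sum_real_append_le) auto
  also have "\<dots> = zs_sum real (map k [0..<s] @ [k s]) N"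
    by simp
  also have "\<dots> = zs_partial (map k [0..<s] @ [k s - 1]) N"
    using k by (intro zs_sum_real_snoc)
  finally show ?thesis .
qed

lemma zeta_star_prefix_less_Suc:
  "k \<in> seqT \<Longrightarrow> zeta_star (map k [0..<r]) < zeta_star (map k [0..<Suc r])"
  using zeta_star_less_snoc[of "map k [0..<r]" "k r"]
    admissible_or_nil_seqT_prefix[of k r] admissible_or_nil_seqT_prefix[of k "Suc r"]
  by simp

lemma incseq_zeta_star_prefix: "k \<in> seqT \<Longrightarrow> incseq (\<lambda>r. zeta_star (map k [0..<r]))"
  using zeta_star_prefix_less_Suc by (intro incseq_SucI less_imp_le) auto

lemma zeta_star_prefix_le_lowered:
  assumes k: "k \<in> seqT" and s: "admissible (map k [0..<s] @ [k s - 1])"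
  shows "zeta_star (map k [0..<r]) \<le> zeta_star (map k [0..<s] @ [k s - 1])"
proof -
  have "zeta_star (map k [0..<r]) \<le> zeta_star (map k [0..<r + Suc s])"
    by (rule incseqD[OF incseq_zeta_star_prefix[OF k]]) simp
  also have "\<dots> \<le> zeta_star (map k [0..<s] @ [k s - 1])"
  proof (rule zeta_star_le[OF admissible_or_nil_seqT_prefix[OF k]])
    fix N :: nat assume "N \<ge> 1"
    then have "zs_partial (map k [0..<r + Suc s]) N \<le> zs_partial (map k [0..<s] @ [k s - 1]) N"
      using seqT_ge_1[OF k] by (intro zs_partial_prefix_le_lowered) auto
    also have "\<dots> \<le> zeta_star (map k [0..<s] @ [k s - 1])"
      using s by (intro zs_partial_le_zeta_star) (simp add: admissible_or_nil_def)
    finally show "zs_partial (map k [0..<r + Suc s]) N \<le> zeta_star (map k [0..<s] @ [k s - 1])" .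
  qed
  finally show ?thesis .
qed

lemma zeta_star_prefix_tendsto_eta:
  assumes k: "k \<in> seqT"
  shows "(\<lambda>r. zeta_star (map k [0..<r])) \<longlonglongrightarrow> eta k"
proof -
  obtain s where "admissible (map k [0..<s] @ [k s - 1])"
    using seqT_lowered_prefix_admissible[OF k] .
  then have "bdd_above (range (\<lambda>r. zeta_star (map k [0..<r])))"
    using zeta_star_prefix_le_lowered[OF k] by (intro bdd_aboveI2) auto
  then have "convergent (\<lambda>r. zeta_star (map k [0..<r]))"
    using LIMSEQ_incseq_SUP[OF _ incseq_zeta_star_prefix[OF k]] by (auto simp: convergent_def)
  then show ?thesis
    unfolding eta_def by (rule convergent_LIMSEQ_iff[THEN iffD1])
qed

lemma zeta_star_prefix_less_eta: "k \<in> seqT \<Longrightarrow> zeta_star (map k [0..<r]) < eta k"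
  using zeta_star_prefix_less_Suc[of k r]
    incseq_le[OF incseq_zeta_star_prefix zeta_star_prefix_tendsto_eta, of k "Suc r"]
  by simp

lemma eta_gt_1: "k \<in> seqT \<Longrightarrow> eta k > 1"
  using zeta_star_prefix_less_eta[of k 0] by (simp add: zeta_star_Nil)

text \<open>If \<open>k\<close> and \<open>m\<close> first differ at \<open>j\<close> with \<open>k j < m j\<close>, every long prefix of \<open>m\<close> is
  dominated by the lowered prefix \<open>k 0, \<dots>, k (j - 1), m j - 1\<close>, which is entrywise at least
  \<open>k 0, \<dots>, k j\<close>.\<close>
lemma succT_imp_eta_less:
  assumes k: "k \<in> seqT" and m: "m \<in> seqT" and "succT k m"
  shows "eta m < eta k"
proof -
  obtain j where j: "\<forall>i<j. k i = m i" "k j < m j"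
    using \<open>succT k m\<close> unfolding succT_def by blast
  have same: "map m [0..<j] = map k [0..<j]"
    using j(1) by (intro map_cong) auto
  have "zs_partial (map m [0..<r]) N \<le> zeta_star (map k [0..<Suc j])"
    if r: "r \<ge> Suc j" and N: "N \<ge> 1" for r N
  proof -
    have "zs_partial (map m [0..<r]) N \<le> zs_partial (map m [0..<j] @ [m j - 1]) N"
      using seqT_ge_1[OF m] r N by (intro zs_partial_prefix_le_lowered)
    also have "\<dots> = zs_partial (map k [0..<j] @ [m j - 1]) N"
      by (simp only: same)
    also have "\<dots> \<le> zs_partial (map k [0..<j] @ [k j]) N"
      using j(2) N
      by (intro zs_sum_antimono_index list_all2_appendI) (auto simp: list_all2_refl)
    also have "\<dots> \<le> zeta_star (map k [0..<Suc j])"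
      using zs_partial_le_zeta_star[OF admissible_or_nil_seqT_prefix[OF k], of "Suc j" N] by simp
    finally show ?thesis .
  qed
  then have "zeta_star (map m [0..<r]) \<le> zeta_star (map k [0..<Suc j])" if "r \<ge> Suc j" for r
    using that by (intro zeta_star_le admissible_or_nil_seqT_prefix m) auto
  then have "eta m \<le> zeta_star (map k [0..<Suc j])"
    by (intro LIMSEQ_le_const2[OF zeta_star_prefix_tendsto_eta[OF m]]) auto
  also have "\<dots> < eta k"
    by (rule zeta_star_prefix_less_eta[OF k])
  finally show ?thesis .
qed

lemma succT_total: "k \<noteq> m \<Longrightarrow> succT k m \<or> succT m k"
proof -
  assume "k \<noteq> m"
  then obtain i where "k i \<noteq> m i" by auto
  define j where "j = (LEAST i. k i \<noteq> m i)"
  have "k j \<noteq> m j"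
    unfolding j_def by (rule LeastI) fact
  moreover have "\<forall>i<j. k i = m i"
    unfolding j_def using not_less_Least by blast
  ultimately show ?thesis
    unfolding succT_def by (cases "k j < m j") (auto intro!: exI[of _ j])
qed

lemma succT_iff_eta_greater:
  assumes "k \<in> seqT" "m \<in> seqT"
  shows "succT k m \<longleftrightarrow> eta k > eta m"
  using succT_imp_eta_less[OF assms] succT_imp_eta_less[OF assms(2,1)] succT_total[of k m]
  by (cases "k = m") auto

lemma inj_on_eta: "inj_on eta seqT"
proof (rule inj_onI)
  fix k m assume k: "k \<in> seqT" and m: "m \<in> seqT" and "eta k = eta m"
  then show "k = m"
    using succT_imp_eta_less[OF k m] succT_imp_eta_less[OF m k] succT_total[of k m] by auto
qed

section \<open>The greedy expansion\<close>

lemma dominated_sums_eventually_small: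
  fixes I :: "nat \<Rightarrow> nat \<Rightarrow> real"
  assumes nonneg: "\<And>t n. 0 \<le> I t n"
    and dominated: "\<And>t n. t \<ge> T \<Longrightarrow> I t n \<le> h n"
    and "summable h"
    and pointwise: "\<And>n. (\<lambda>t. I t n) \<longlonglongrightarrow> 0"
    and "\<epsilon> > 0"
  shows "\<exists>R. \<forall>t\<ge>R. \<forall>F. finite F \<longrightarrow> sum (I t) F \<le> \<epsilon>"
proof -
  have h_nonneg: "0 \<le> h n" for n
    using nonneg[of T n] dominated[of T n] by simp
  have "\<forall>\<^sub>F M in sequentially. suminf h - \<epsilon>/2 < (\<Sum>n<M. h n)"
    using summable_LIMSEQ[OF \<open>summable h\<close>] by (rule order_tendstoD) (use \<open>\<epsilon> > 0\<close> in simp)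
  then obtain M where "suminf h - \<epsilon>/2 < (\<Sum>n<M. h n)"
    by (meson eventually_sequentially order.refl)
  then have M: "suminf h - (\<Sum>n<M. h n) < \<epsilon>/2" by linarith
  have "(\<lambda>t. \<Sum>n<M. I t n) \<longlonglongrightarrow> (\<Sum>n<M. 0)"
    by (intro tendsto_sum pointwise)
  then have "\<forall>\<^sub>F t in sequentially. (\<Sum>n<M. I t n) < \<epsilon>/2"
    by (rule order_tendstoD) (use \<open>\<epsilon> > 0\<close> in simp)
  then obtain R where R: "\<And>t. t \<ge> R \<Longrightarrow> (\<Sum>n<M. I t n) < \<epsilon>/2"
    by (auto simp: eventually_sequentially)
  have "sum (I t) F \<le> \<epsilon>" if t: "t \<ge> max R T" and F: "finite F" for t F
  proof -
    have "sum h (F - {..<M}) + (\<Sum>n<M. h n) = sum h (F \<union> {..<M})"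
      using F by (subst sum.union_disjoint[symmetric]) (auto intro: sum.cong)
    also have "\<dots> \<le> suminf h"
      using F h_nonneg by (intro sum_le_suminf \<open>summable h\<close>) auto
    finally have tail: "sum h (F - {..<M}) < \<epsilon>/2"
      using M by linarith
    have "sum (I t) F = sum (I t) (F \<inter> {..<M}) + sum (I t) (F - {..<M})"
      using F by (rule sum.Int_Diff)
    also have "\<dots> \<le> (\<Sum>n<M. I t n) + sum h (F - {..<M})"
      using t F nonneg dominated by (intro add_mono sum_mono2 sum_mono) auto
    finally show ?thesis
      using R[of t] t tail by linarith
  qed
  then show ?thesis by blast
qed

lemma zs_sum_defect_prefix_tendsto_0:
  assumes k: "\<And>i. k i \<ge> 1" and n: "n \<ge> 1"
  shows "(\<lambda>t. zs_sum (\<lambda>m. real m - 1) (map k [0..<t]) n) \<longlonglongrightarrow> 0"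
proof (rule tendsto_sandwich[where f = "\<lambda>_. 0"
      and h = "\<lambda>t. zs_sum (\<lambda>m. real m - 1) (replicate t 1) n"])
  show "\<forall>\<^sub>F t in sequentially. 0 \<le> zs_sum (\<lambda>m. real m - 1) (map k [0..<t]) n"
    using n by (intro always_eventually allI zs_sum_nonneg) auto
  have "list_all2 (\<le>) (replicate t 1) (map k [0..<t])" for t
    using k by (auto simp: list_all2_conv_all_nth)
  then show "\<forall>\<^sub>F t in sequentially.
      zs_sum (\<lambda>m. real m - 1) (map k [0..<t]) n \<le> zs_sum (\<lambda>m. real m - 1) (replicate t 1) n"
    using n by (intro always_eventually allI zs_sum_antimono_index) auto
qed (use zs_sum_defect_ones_tendsto_0[OF n] in auto)

lemma summable_zs_sum_real_shifted_prefix: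
  assumes k: "k \<in> seqT" and s: "admissible (map k [0..<s] @ [k s - 1])"
  shows "summable (\<lambda>n. zs_sum real (map (\<lambda>i. k (Suc i)) [0..<s]) n / real n ^ k 0)"
    (is "summable ?h")
proof (rule bounded_imp_summable)
  have k0: "(0::real) ^ k 0 = 0"
    using seqT_ge_1[OF k, of 0] by (simp add: zero_power)
  show "0 \<le> ?h n" for n
    by (cases "n = 0") (simp add: k0, auto intro!: divide_nonneg_nonneg zs_sum_nonneg)
  have "(\<Sum>j\<le>n. ?h j) = (\<Sum>j=1..n. ?h j)" for n
    by (simp add: atMost_atLeast0 sum.atLeast_Suc_atMost k0)
  also have "\<dots> n = zs_sum real (map k [0..<Suc s]) n" for n
    unfolding map_upt_Suc_Cons by simp
  also have "\<dots> n = zs_partial (map k [0..<s] @ [k s - 1]) n" for n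
    using zs_sum_real_snoc[of "k s" "map k [0..<s]" n] seqT_ge_1[OF k, of s] by simp
  also have "\<dots> n \<le> zeta_star (map k [0..<s] @ [k s - 1])" for n
    using s by (intro zs_partial_le_zeta_star) (simp add: admissible_or_nil_def)
  finally show "(\<Sum>j\<le>n. ?h j) \<le> zeta_star (map k [0..<s] @ [k s - 1])" for n .
qed

text \<open>Along \<open>k \<in> seqT\<close> the weighted and the plain truncated sums merge uniformly in \<open>N\<close>:
  for fixed \<open>n\<^sub>1\<close> the inner defect is at most that of a string of ones, which vanishes,
  while the terms are dominated by the convergent sum for the lowered prefix.\<close>
lemma zs_sum_defect_prefix_small:
  assumes k: "k \<in> seqT" and "\<epsilon> > 0"
  shows "\<exists>R. \<forall>r\<ge>R. \<forall>N. zs_sum (\<lambda>m. real m - 1) (map k [0..<r]) N \<le> \<epsilon>"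
proof -
  obtain s where s: "admissible (map k [0..<s] @ [k s - 1])"
    using seqT_lowered_prefix_admissible[OF k] .
  define k' where "k' = (\<lambda>i. k (Suc i))"
  define I where "I t n = zs_sum (\<lambda>m. real m - 1) (map k' [0..<t]) n / real n ^ k 0" for t n
  define h where "h n = zs_sum real (map k' [0..<s]) n / real n ^ k 0" for n
  have k0: "(0::real) ^ k 0 = 0"
    using seqT_ge_1[OF k, of 0] by (simp add: zero_power)
  have k': "k' i \<ge> 1" for i
    using seqT_ge_1[OF k] unfolding k'_def .
  have I_nonneg: "0 \<le> I t n" for t n
    unfolding I_def by (cases "n = 0") (simp add: k0, auto intro!: divide_nonneg_nonneg zs_sum_nonneg)
  have dominated: "I t n \<le> h n" if "t \<ge> s" for t n
  proof (cases "n = 0")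
    case False
    have "zs_sum (\<lambda>m. real m - 1) (map k' [0..<t]) n \<le> zs_sum real (map k' [0..<s] @ map k' [s..<t]) n"
      using False by (simp add: zs_sum_mono_weight flip: map_upt_split[OF that])
    also have "\<dots> \<le> zs_sum real (map k' [0..<s]) n"
      using False k' by (intro zs_sum_real_append_le) auto
    finally show ?thesis
      unfolding I_def h_def by (intro divide_right_mono) auto
  qed (simp add: I_def h_def k0)
  have "summable h"
    using summable_zs_sum_real_shifted_prefix[OF k s] unfolding h_def k'_def .
  have "(\<lambda>t. I t n) \<longlonglongrightarrow> 0" for n
  proof (cases "n = 0")
    case False
    have "(\<lambda>t. I t n) \<longlonglongrightarrow> 0 / real n ^ k 0"
      unfolding I_def using k' False
      by (intro tendsto_divide tendsto_const zs_sum_defect_prefix_tendsto_0) auto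
    then show ?thesis by simp
  qed (simp add: I_def k0)
  then obtain R where R: "\<And>t F. t \<ge> R \<Longrightarrow> finite F \<Longrightarrow> sum (I t) F \<le> \<epsilon>"
    using dominated_sums_eventually_small[where I = I and T = s and h = h,
        OF I_nonneg dominated \<open>summable h\<close> _ \<open>\<epsilon> > 0\<close>] by blast
  have "zs_sum (\<lambda>m. real m - 1) (map k [0..<Suc t]) N \<le> \<epsilon>" if "t \<ge> R" for t N
    using R[OF that, of "{1..N}"] unfolding I_def k'_def map_upt_Suc_Cons by simp
  then show ?thesis
    by (metis Suc_le_D Suc_le_mono)
qed

lemma ex_harm_gt: "\<exists>N. (y::real) < harm N"
proof -
  have "\<forall>\<^sub>F N in sequentially. y + 1 \<le> (harm N :: real)"
    using harm_at_top unfolding filterlim_at_top by blast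
  then obtain N where "y + 1 \<le> (harm N :: real)"
    by (auto simp: eventually_sequentially)
  then show ?thesis by (intro exI[of _ N]) simp
qed

text \<open>Since \<open>zs_sum real p\<close> bounds the truncated sums of every continuation of \<open>p\<close>
  (\<open>zs_sum_real_append_le\<close>), \<open>reaches p x\<close> says that this upper bound does not cut off \<open>x\<close>.\<close>
definition reaches :: "nat list \<Rightarrow> real \<Rightarrow> bool" where
  "reaches p x \<longleftrightarrow> (\<forall>y<x. \<exists>N. y < zs_sum real p N)"

definition greedy_next :: "real \<Rightarrow> nat list \<Rightarrow> nat" where
  "greedy_next x p = (LEAST a. admissible (p @ [a]) \<and> zeta_star (p @ [a]) < x)"

primrec greedy_prefix :: "real \<Rightarrow> nat \<Rightarrow> nat list" where
  "greedy_prefix x 0 = []"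
| "greedy_prefix x (Suc r) = greedy_prefix x r @ [greedy_next x (greedy_prefix x r)]"

definition greedy_seq :: "real \<Rightarrow> nat \<Rightarrow> nat" where
  "greedy_seq x r = greedy_next x (greedy_prefix x r)"

lemma greedy_prefix_eq_map: "greedy_prefix x r = map (greedy_seq x) [0..<r]"
  by (induction r) (auto simp: greedy_seq_def)

lemma greedy_next:
  assumes p: "admissible_or_nil p" and less: "zeta_star p < x"
  shows greedy_next_admissible: "admissible (p @ [greedy_next x p])"
    and greedy_next_less: "zeta_star (p @ [greedy_next x p]) < x"
    and greedy_next_least: "b < greedy_next x p \<Longrightarrow> admissible (p @ [b]) \<Longrightarrow> x \<le> zeta_star (p @ [b])"
proof -
  have "\<forall>\<^sub>F a in sequentially. zeta_star (p @ [a + 2]) < x"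
    by (rule order_tendstoD(2)[OF zeta_star_snoc_tendsto[OF p] less])
  then obtain a where "zeta_star (p @ [a + 2]) < x"
    unfolding eventually_sequentially by blast
  moreover have "admissible (p @ [a + 2])"
    by (intro admissible_snoc p) simp
  ultimately have "admissible (p @ [a + 2]) \<and> zeta_star (p @ [a + 2]) < x"
    by simp
  then have "admissible (p @ [greedy_next x p]) \<and> zeta_star (p @ [greedy_next x p]) < x"
    unfolding greedy_next_def by (rule LeastI)
  then show "admissible (p @ [greedy_next x p])" "zeta_star (p @ [greedy_next x p]) < x"
    by auto
  show "x \<le> zeta_star (p @ [b])" if "b < greedy_next x p" "admissible (p @ [b])"
  proof -
    have "\<not> (admissible (p @ [b]) \<and> zeta_star (p @ [b]) < x)"
      using not_less_Least[of b "\<lambda>a. admissible (p @ [a]) \<and> zeta_star (p @ [a]) < x"] that(1)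
      unfolding greedy_next_def .
    then show ?thesis using that(2) by simp
  qed
qed

text \<open>If the greedy entry \<open>a\<close> could be lowered, minimality gives \<open>\<zeta>\<^sup>\<star>(p, a - 1) \<ge> x\<close>, and
  \<open>zs_sum real (p @ [a])\<close> is exactly the truncation of \<open>\<zeta>\<^sup>\<star>(p, a - 1)\<close>; if \<open>a = 1\<close>, appending it
  leaves \<open>zs_sum real p\<close> unchanged; and for \<open>p @ [a] = [2]\<close> the weighted sums are harmonic.\<close>
lemma reaches_snoc_greedy_next:
  assumes p: "admissible_or_nil p" and less: "zeta_star p < x"
    and reach: "p \<noteq> [] \<Longrightarrow> reaches p x"
  shows "reaches (p @ [greedy_next x p]) x"
proof -
  define a where "a = greedy_next x p"
  have adm: "admissible (p @ [a])"
    unfolding a_def by (rule greedy_next_admissible[OF p less])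
  have a1: "a \<ge> 1" and a2: "p = [] \<Longrightarrow> a \<ge> 2"
    using adm by (auto simp: admissible_def)
  consider (one) "a = 1" | (two) "p = [] \<and> a = 2" | (lower) "a \<ge> 1" "admissible (p @ [a - 1])"
  proof (cases "a = 1 \<or> (p = [] \<and> a = 2)")
    case False
    then have "a - 1 \<ge> 2 \<or> (p \<noteq> [] \<and> a - 1 \<ge> 1)"
      using a1 a2 by auto
    then show ?thesis
      using that(3) a1 admissible_snoc[OF p] by blast
  qed auto
  then show ?thesis
  proof cases
    case one
    then have "p \<noteq> []" using adm by (auto simp: admissible_def)
    then show ?thesis
      using reach unfolding a_def[symmetric] one reaches_def zs_sum_real_snoc_1 by blast
  next
    case two
    then show ?thesis
      unfolding a_def[symmetric] reaches_def using zs_sum_real_2 ex_harm_gt by simp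
  next
    case lower
    have "x \<le> zeta_star (p @ [a - 1])"
      using greedy_next_least[OF p less _ lower(2)] lower(1) unfolding a_def by simp
    moreover have "zs_partial (p @ [a - 1]) \<longlonglongrightarrow> zeta_star (p @ [a - 1])"
      using lower(2) by (intro zs_partial_tendsto_zeta_star) (simp add: admissible_or_nil_def)
    ultimately have "\<forall>\<^sub>F N in sequentially. y < zs_partial (p @ [a - 1]) N" if "y < x" for y
      using that by (elim order_tendstoD(1)) simp
    then have "\<exists>N. y < zs_partial (p @ [a - 1]) N" if "y < x" for y
      using that by (auto simp: eventually_sequentially)
    then show ?thesis
      unfolding reaches_def a_def[symmetric] using zs_sum_real_snoc[OF lower(1)] by simp
  qed
qed

lemma greedy_prefix_invariant:
  assumes "x > 1"
  shows "admissible_or_nil (greedy_prefix x r) \<and> zeta_star (greedy_prefix x r) < x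
    \<and> (greedy_prefix x r \<noteq> [] \<longrightarrow> reaches (greedy_prefix x r) x)"
proof (induction r)
  case 0
  then show ?case using assms by (simp add: admissible_or_nil_def zeta_star_Nil)
next
  case (Suc r)
  then have "admissible_or_nil (greedy_prefix x r)" "zeta_star (greedy_prefix x r) < x"
    "greedy_prefix x r \<noteq> [] \<Longrightarrow> reaches (greedy_prefix x r) x"
    by auto
  then show ?case
    using greedy_next_admissible greedy_next_less reaches_snoc_greedy_next
    by (simp add: admissible_or_nil_def)
qed

lemma zeta_star_2_ones_unbounded: "\<exists>t. x \<le> zeta_star (2 # replicate t 1)"
proof (rule ccontr)
  assume "\<nexists>t. x \<le> zeta_star (2 # replicate t 1)"
  then have less: "zeta_star (2 # replicate t 1) < x" for t
    by (simp add: not_le)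
  obtain N where N: "x < harm N"
    using ex_harm_gt by blast
  have "(\<lambda>t. \<Sum>m=1..N. zs_partial (replicate t 1) m / real m ^ 2) \<longlonglongrightarrow> (\<Sum>m=1..N. real m / real m ^ 2)"
    by (intro tendsto_sum tendsto_divide tendsto_const zs_partial_ones_tendsto) auto
  then have "(\<lambda>t. zs_partial (2 # replicate t 1) N) \<longlonglongrightarrow> harm N"
    using zs_sum_real_2[of N] by simp
  moreover have "zs_partial (2 # replicate t 1) N \<le> x" for t
    using zs_partial_le_zeta_star[of "2 # replicate t 1" N] less[of t]
    by (simp add: admissible_or_nil_def admissible_def)
  ultimately have "harm N \<le> x"
    by (intro LIMSEQ_le_const2) auto
  then show False using N by simp
qed

lemma greedy_seq_in_seqT:
  assumes x: "x > 1"
  shows "greedy_seq x \<in> seqT"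
proof -
  let ?k = "greedy_seq x"
  have adm: "admissible (map ?k [0..<Suc i])" for i
    using greedy_next_admissible greedy_prefix_invariant[OF x, of i]
    by (simp add: greedy_prefix_eq_map greedy_seq_def)
  have k1: "?k i \<ge> 1" for i
    using adm[of i] by (simp add: admissible_def)
  have k0: "?k 0 \<ge> 2"
    using adm[of 0] by (simp add: admissible_def)
  have "\<exists>s\<ge>1. ?k s \<ge> 2" if k02: "?k 0 = 2"
  proof (rule ccontr)
    assume "\<not> (\<exists>s\<ge>1. ?k s \<ge> 2)"
    then have not2: "\<not> 2 \<le> ?k (Suc i)" for i
      by auto
    have "?k (Suc i) = 1" for i
      using k1[of "Suc i"] not2[of i] by linarith
    then have "greedy_prefix x (Suc t) = 2 # replicate t 1" for t
      unfolding greedy_prefix_eq_map map_upt_Suc_Cons k02 by (simp add: map_replicate_const)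
    then have less: "zeta_star (2 # replicate t 1) < x" for t
      using greedy_prefix_invariant[OF x, of "Suc t"] by simp
    obtain t where "x \<le> zeta_star (2 # replicate t 1)"
      using zeta_star_2_ones_unbounded by blast
    then show False
      using less[of t] by simp
  qed
  then show ?thesis
    unfolding seqT_def using k0 k1 by auto
qed

lemma eta_greedy_seq:
  assumes x: "x > 1"
  shows "eta (greedy_seq x) = x"
proof (rule antisym)
  let ?k = "greedy_seq x"
  have k: "?k \<in> seqT" by (rule greedy_seq_in_seqT[OF x])
  show "eta ?k \<le> x"
    using greedy_prefix_invariant[OF x]
    by (intro LIMSEQ_le_const2[OF zeta_star_prefix_tendsto_eta[OF k]])
       (auto simp: greedy_prefix_eq_map less_imp_le)
  show "x \<le> eta ?k"
  proof (rule field_le_epsilon)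
    fix e :: real assume e: "e > 0"
    obtain R where R: "\<And>r N. r \<ge> R \<Longrightarrow> zs_sum (\<lambda>m. real m - 1) (map ?k [0..<r]) N \<le> e/2"
      using zs_sum_defect_prefix_small[OF k, of "e/2"] e by auto
    define r where "r = Suc R"
    have "reaches (map ?k [0..<r]) x"
      using greedy_prefix_invariant[OF x, of r] by (simp add: r_def greedy_prefix_eq_map)
    moreover have "x - e/2 < x" using e by simp
    ultimately obtain N where N: "x - e/2 < zs_sum real (map ?k [0..<r]) N"
      unfolding reaches_def by blast
    have "zs_partial (map ?k [0..<r]) N < eta ?k"
      using zs_partial_le_zeta_star[OF admissible_or_nil_seqT_prefix[OF k]]
        zeta_star_prefix_less_eta[OF k] by (rule le_less_trans)
    then show "x \<le> eta ?k + e"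
      using N R[of r N] zs_sum_real_eq_partial_add_defect[of "map ?k [0..<r]" N]
      unfolding r_def by simp
  qed
qed

lemma eta_image_seqT: "eta ` seqT = {1<..}"
proof
  show "eta ` seqT \<subseteq> {1<..}"
    using eta_gt_1 by auto
  show "{1<..} \<subseteq> eta ` seqT"
  proof
    fix x :: real assume "x \<in> {1<..}"
    then show "x \<in> eta ` seqT"
      using eta_greedy_seq greedy_seq_in_seqT by (metis greaterThan_iff image_eqI)
  qed
qed

section \<open>Derived sets\<close>

lemma derived_set_subset_closed: "closed S \<Longrightarrow> A \<subseteq> S \<Longrightarrow> derived_set A \<subseteq> S"
  unfolding derived_set_def using closed_limpt islimpt_subset by blast

lemma derived_set_atLeast: "derived_set {a..} = {a::real..}"
proof
  show "derived_set {a..} \<subseteq> {a..}"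
    by (rule derived_set_subset_closed) auto
  show "{a..} \<subseteq> derived_set {a..}"
  proof
    fix x assume "x \<in> {a..}"
    then have "x islimpt {a..x + 1}" by simp
    then show "x \<in> derived_set {a..}"
      unfolding derived_set_def by (auto intro: islimpt_subset)
  qed
qed

lemma Zstar_subset_atLeast_1: "Zstar \<subseteq> {1..}"
  unfolding Zstar_def using zeta_star_ge_1 by auto

lemma islimpt_Zstar_sequence:
  assumes "\<And>n. admissible (ks n)" "\<And>n. zeta_star (ks n) \<noteq> x"
    and "(\<lambda>n. zeta_star (ks n)) \<longlonglongrightarrow> x"
  shows "x islimpt Zstar"
  unfolding islimpt_sequential Zstar_def using assms
  by (intro exI[of _ "\<lambda>n. zeta_star (ks n)"]) blast

lemma islimpt_Zstar:
  assumes "x \<ge> 1"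
  shows "x islimpt Zstar"
proof (cases "x = 1")
  case True
  have nil: "admissible_or_nil []"
    by (simp add: admissible_or_nil_def)
  show ?thesis
  proof (rule islimpt_Zstar_sequence[where ks = "\<lambda>a. [a + 2]"])
    show "admissible [a + 2]" for a
      by (simp add: admissible_def)
    show "zeta_star [a + 2] \<noteq> x" for a
      using zeta_star_less_snoc[OF nil, of "a + 2"] True
      by (simp add: zeta_star_Nil admissible_or_nil_def admissible_def)
    show "(\<lambda>a. zeta_star [a + 2]) \<longlonglongrightarrow> x"
      using zeta_star_snoc_tendsto[OF nil] True by (simp add: zeta_star_Nil)
  qed
next
  case False
  then have x: "x > 1" using assms by simp
  let ?k = "greedy_seq x"
  have k: "?k \<in> seqT" by (rule greedy_seq_in_seqT[OF x])
  show ?thesis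
  proof (rule islimpt_Zstar_sequence[where ks = "\<lambda>r. map ?k [0..<Suc r]"])
    show "admissible (map ?k [0..<Suc r])" for r
      by (rule admissible_seqT_prefix[OF k]) simp
    show "zeta_star (map ?k [0..<Suc r]) \<noteq> x" for r
      using zeta_star_prefix_less_eta[OF k, of "Suc r"] eta_greedy_seq[OF x] by simp
    show "(\<lambda>r. zeta_star (map ?k [0..<Suc r])) \<longlonglongrightarrow> x"
      using LIMSEQ_Suc[OF zeta_star_prefix_tendsto_eta[OF k]] eta_greedy_seq[OF x] by simp
  qed
qed

lemma derived_set_Zstar: "derived_set Zstar = {1..}"
proof
  show "derived_set Zstar \<subseteq> {1..}"
    using Zstar_subset_atLeast_1 by (intro derived_set_subset_closed) auto
  show "{1..} \<subseteq> derived_set Zstar"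
    using islimpt_Zstar unfolding derived_set_def by auto
qed

lemma funpow_derived_set_Zstar: "n \<ge> 1 \<Longrightarrow> (derived_set ^^ n) Zstar = {1..}"
proof (induction n)
  case (Suc n)
  then show ?case
    by (cases "n = 0") (simp_all add: derived_set_Zstar derived_set_atLeast)
qed simp

theorem theorem1p3:
  shows "(\<forall>k\<in>seqT. \<exists>L. (\<lambda>r. zeta_star (map k [0..<r])) \<longlonglongrightarrow> L \<and> L > 1)
    \<and> bij_betw eta seqT {1<..}
    \<and> (\<forall>k\<in>seqT. \<forall>m\<in>seqT. succT k m \<longleftrightarrow> eta k > eta m)
    \<and> (\<forall>n\<ge>1. (derived_set ^^ n) Zstar = {1..})"
proof (intro conjI ballI allI impI)
  fix k assume "k \<in> seqT"
  then show "\<exists>L. (\<lambda>r. zeta_star (map k [0..<r])) \<longlonglongrightarrow> L \<and> L > 1"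
    using zeta_star_prefix_tendsto_eta eta_gt_1 by blast
next
  show "bij_betw eta seqT {1<..}"
    unfolding bij_betw_def using inj_on_eta eta_image_seqT by blast
next
  fix k m assume "k \<in> seqT" "m \<in> seqT"
  then show "succT k m \<longleftrightarrow> eta k > eta m"
    by (rule succT_iff_eta_greater)
next
  fix n :: nat assume "n \<ge> 1"
  then show "(derived_set ^^ n) Zstar = {1..}"
    by (rule funpow_derived_set_Zstar)
qed

end
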